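(* Consider $M$ base stations $\mathcal{M}=\{1,\dots,M\}$ and $N$ test points $\mathcal{N}=\{1,\dots,N\}$, with data demands $d_j>0$ ($j\in\mathcal{N}$), an assignment matrix $X=(x_{i,j})\in\{0,1\}^{M\times N}$ such that every base station $i$ has at least one $j$ with $x_{i,j}=1$, power gains $g_{i,j}\ge 0$ with $g_{i,j}>0$ whenever $x_{i,j}=1$, transmit power spectral densities $P_i>0$, noise power $\sigma^2>0$, and constants $K>0$, $B>0$, $\eta>0$. For $\boldsymbol{\rho}=(\rho_1,\dots,\rho_M)\in\mathbb{R}_+^M$ define $$\omega_{i,j}(\boldsymbol{\rho})=B\log_2\!\left(1+\frac{P_i g_{i,j}}{\eta\left(\sum_{l\in\mathcal{M}\setminus\{i\}}P_l g_{l,j}\rho_l+\sigma^2\right)}\right),\qquad I_i(\boldsymbol{\rho})=\sum_{j\in\mathcal{N}:\,x_{i,j}=1}\frac{d_j}{K\,\omega_{i,j}(\boldsymbol{\rho})}.$$ Then each $I_i:\mathbb{R}_+^M\to\mathbb{R}_{++}$ is concave, and hence a standard interference function; consequently $\mathcal{J}(\boldsymbol{\rho})=[I_1(\boldsymbol{\rho}),\dots,I_M(\boldsymbol{\rho})]^T$ is a standard interference mapping.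
   Context: $\mathbb{R}_+$ denotes the nonnegative reals and $\mathbb{R}_{++}$ the strictly positive reals; vector inequalities are componentwise. A function $I:\mathbb{R}_+^M\to\mathbb{R}_{++}$ is called a standard interference function if it satisfies scalability ($\alpha I(\mathbf{x})>I(\alpha\mathbf{x})$ for all $\mathbf{x}\in\mathbb{R}_+^M$, $\alpha>1$) and monotonicity ($I(\mathbf{x}_1)\ge I(\mathbf{x}_2)$ whenever $\mathbf{x}_1\ge\mathbf{x}_2$). Given standard interference functions $I_1,\dots,I_M$, the mapping $\mathbf{x}\mapsto[I_1(\mathbf{x}),\dots,I_M(\mathbf{x})]^T$ is called a standard interference mapping. *)

theory Defs
  imports "HOL-Analysis.Analysis"
begin

text \<open>Base stations are indexed by a finite type 'm, test points by a finite type 'n.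
  Vectors in R^M are elements of real^'m.\<close>

definition nonneg_orthant :: "(real^'m) set" where
  "nonneg_orthant = {x. \<forall>k. 0 \<le> x $ k}"

definition standard_interference_function :: "(real^'m \<Rightarrow> real) \<Rightarrow> bool" where
  "standard_interference_function I \<longleftrightarrow>
     (\<forall>x\<in>nonneg_orthant. I x > 0) \<and>
     (\<forall>x\<in>nonneg_orthant. \<forall>\<alpha>::real. \<alpha> > 1 \<longrightarrow> \<alpha> * I x > I (\<alpha> *\<^sub>R x)) \<and>
     (\<forall>x1\<in>nonneg_orthant. \<forall>x2\<in>nonneg_orthant.
        (\<forall>k. x2 $ k \<le> x1 $ k) \<longrightarrow> I x1 \<ge> I x2)"

definition standard_interference_mapping :: "(real^'m \<Rightarrow> real^'m) \<Rightarrow> bool" where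
  "standard_interference_mapping J \<longleftrightarrow>
     (\<forall>i. standard_interference_function (\<lambda>x. J x $ i))"

definition omega ::
  "real \<Rightarrow> ('m \<Rightarrow> real) \<Rightarrow> ('m \<Rightarrow> 'n \<Rightarrow> real) \<Rightarrow> real \<Rightarrow> real
     \<Rightarrow> 'm::finite \<Rightarrow> 'n \<Rightarrow> real^'m \<Rightarrow> real" where
  "omega B P g \<eta> \<sigma>2 i j \<rho> =
     B * log 2 (1 + P i * g i j /
        (\<eta> * ((\<Sum>l\<in>UNIV - {i}. P l * g l j * \<rho> $ l) + \<sigma>2)))"

text \<open>Load function I_i(rho); the assignment matrix x is given as a boolean
  matrix (x i j \<longleftrightarrow> x_{i,j} = 1).\<close>
definition load_fun ::
  "('n::finite \<Rightarrow> real) \<Rightarrow> ('m::finite \<Rightarrow> 'n \<Rightarrow> bool) \<Rightarrow> real \<Rightarrow> real \<Rightarrow> ('m \<Rightarrow> real)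
     \<Rightarrow> ('m \<Rightarrow> 'n \<Rightarrow> real) \<Rightarrow> real \<Rightarrow> real \<Rightarrow> 'm \<Rightarrow> real^'m \<Rightarrow> real" where
  "load_fun d x K B P g \<eta> \<sigma>2 i \<rho> =
     (\<Sum>j\<in>{j. x i j}. d j / (K * omega B P g \<eta> \<sigma>2 i j \<rho>))"

end

theory Submission
  imports Defs
begin

(*
  Write c = P_i g_ij / eta and S_j(rho) = sum_{l <> i} P_l g_lj rho_l.
  Since log_2 y = ln y / ln 2, every summand of the load I_i is a positive constant
  times  h_c(S_j(rho) + sigma^2)  where  h_c(t) = 1 / ln (1 + c/t)  for t > 0.

  1. The scalar function h_c is positive, increasing and concave on (0, inf); concavity
     follows from a second-derivative computation whose sign reduces to the elementary
     bound  ln (1 + u) >= 2u / (2 + u)  for u >= 0.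
  2. Composing with the affine map rho |-> S_j(rho) + sigma^2, scaling by positive
     constants and summing preserves concavity, positivity and monotonicity, so I_i is
     concave, positive and monotone on the nonnegative orthant.
  3. A concave function on a set containing 0 with f 0 > 0 is strictly scalable:
     f (alpha x) < alpha f x for alpha > 1.  Hence positivity, monotonicity and
     concavity together make I_i a standard interference function, and the load
     vector is a standard interference mapping.
*)

lemma concave_on_sum_fun:
  assumes "finite A" "convex S" "\<And>a. a \<in> A \<Longrightarrow> concave_on S (f a)"
  shows "concave_on S (\<lambda>x. \<Sum>a\<in>A. f a x)"
  using assms
proof (induction A rule: finite_induct)
  case empty
  then show ?case by (simp add: concave_on_const)
next
  case (insert a A)
  then show ?case by (simp add: concave_on_add)
qed

lemma concave_on_compose_affine:
  assumes h: "concave_on T h" and S: "convex S" and L: "linear L"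
    and maps: "\<And>x. x \<in> S \<Longrightarrow> L x + b \<in> T"
  shows "concave_on S (\<lambda>x. h (L x + b))"
  unfolding concave_on_iff
proof (intro conjI S ballI allI impI)
  fix x y and u v :: real
  assume xy: "x \<in> S" "y \<in> S" and uv: "0 \<le> u" "0 \<le> v" "u + v = 1"
  have "L (u *\<^sub>R x + v *\<^sub>R y) + b = u *\<^sub>R (L x + b) + v *\<^sub>R (L y + b)"
    using uv L by (simp add: linear_add linear_scale algebra_simps flip: scaleR_add_left)
  moreover have "u * h (L x + b) + v * h (L y + b) \<le> h (u *\<^sub>R (L x + b) + v *\<^sub>R (L y + b))"
    using h maps[OF xy(1)] maps[OF xy(2)] uv unfolding concave_on_iff by blast
  ultimately show "u * h (L x + b) + v * h (L y + b) \<le> h (L (u *\<^sub>R x + v *\<^sub>R y) + b)"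
    by simp
qed

lemma concave_strictly_scalable:
  fixes f :: "'a::real_vector \<Rightarrow> real"
  assumes conc: "concave_on S f" and zero: "0 \<in> S" "f 0 > 0"
    and scaled: "\<alpha> *\<^sub>R x \<in> S" and \<alpha>: "\<alpha> > 1"
  shows "f (\<alpha> *\<^sub>R x) < \<alpha> * f x"
proof -
  have chord: "u * f a + v * f b \<le> f (u *\<^sub>R a + v *\<^sub>R b)"
    if "a \<in> S" "b \<in> S" "u \<ge> 0" "v \<ge> 0" "u + v = 1" for a b u v
    using conc that unfolding concave_on_iff by blast
  have "(1/\<alpha>) * f (\<alpha> *\<^sub>R x) + (1 - 1/\<alpha>) * f 0
          \<le> f ((1/\<alpha>) *\<^sub>R (\<alpha> *\<^sub>R x) + (1 - 1/\<alpha>) *\<^sub>R 0)"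
    using scaled zero(1) \<alpha> by (intro chord) auto
  also have "(1/\<alpha>) *\<^sub>R (\<alpha> *\<^sub>R x) + (1 - 1/\<alpha>) *\<^sub>R 0 = x"
    using \<alpha> by simp
  finally have "(1/\<alpha>) * f (\<alpha> *\<^sub>R x) < f x"
    using zero(2) \<alpha> by (smt (verit) divide_less_eq_1_pos mult_pos_pos)
  then show ?thesis
    using \<alpha> by (simp add: field_simps)
qed

lemma standard_interference_functionI:
  fixes f :: "real^'m \<Rightarrow> real"
  assumes conc: "concave_on nonneg_orthant f"
    and pos: "\<And>x. x \<in> nonneg_orthant \<Longrightarrow> f x > 0"
    and mono: "\<And>x1 x2. x2 \<in> nonneg_orthant \<Longrightarrow> \<forall>k. x2 $ k \<le> x1 $ k \<Longrightarrow> f x2 \<le> f x1"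
  shows "standard_interference_function f"
proof -
  have zero: "0 \<in> (nonneg_orthant :: (real^'m) set)"
    by (simp add: nonneg_orthant_def)
  have "\<alpha> * f x > f (\<alpha> *\<^sub>R x)" if "x \<in> nonneg_orthant" "\<alpha> > 1" for x \<alpha>
    using that by (intro concave_strictly_scalable[OF conc zero pos[OF zero]])
      (auto simp: nonneg_orthant_def)
  then show ?thesis
    unfolding standard_interference_function_def using pos mono by blast
qed

lemma convex_nonneg_orthant: "convex (nonneg_orthant :: (real^'m) set)"
  unfolding convex_def nonneg_orthant_def by auto

text \<open>Elementary lower bound for the logarithm, needed for the sign of the second
  derivative below.\<close>
lemma ln_one_plus_lower_bound:
  fixes u :: real
  assumes "u \<ge> 0"
  shows "2*u/(2+u) \<le> ln (1+u)"
proof -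
  let ?D = "\<lambda>u::real. ln (1+u) - 2*u/(2+u)"
  have "?D 0 \<le> ?D u"
  proof (rule DERIV_nonneg_imp_nondecreasing[OF assms])
    fix y :: real
    assume y: "0 \<le> y" "y \<le> u"
    have "(?D has_real_derivative (1/(1+y) - 4/(2+y)^2)) (at y)"
      using y by (auto intro!: derivative_eq_intros simp: field_simps power2_eq_square)
    moreover have "1/(1+y) - 4/(2+y)^2 = y^2 / ((1+y) * (2+y)^2)"
      using y by (simp add: divide_simps) (simp add: algebra_simps power2_eq_square)
    then have "1/(1+y) - 4/(2+y)^2 \<ge> 0"
      using y by simp
    ultimately show "\<exists>z. (?D has_real_derivative z) (at y) \<and> 0 \<le> z" by blast
  qed
  then show ?thesis by simp
qed

text \<open>The reciprocal rate \<open>1 / ln (1 + c/t)\<close> as a function of the interference-plus-noise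
  level \<open>t\<close>.\<close>
definition inv_rate :: "real \<Rightarrow> real \<Rightarrow> real" where
  "inv_rate c t = 1 / ln (1 + c/t)"

lemma inv_rate_pos:
  assumes "c > 0" "t > 0"
  shows "inv_rate c t > 0"
  using assms by (simp add: inv_rate_def ln_gt_zero)

lemma inv_rate_mono:
  assumes c: "c > 0" and t: "0 < t1" "t1 \<le> t2"
  shows "inv_rate c t1 \<le> inv_rate c t2"
proof -
  have pos: "c/t2 > 0" using c t by simp
  have "c/t2 \<le> c/t1" using c t by (simp add: frac_le)
  then have "ln (1 + c/t2) \<le> ln (1 + c/t1)"
    using pos by simp
  moreover have "ln (1 + c/t2) > 0" using pos by (simp add: ln_gt_zero)
  ultimately show ?thesis
    unfolding inv_rate_def by (simp add: frac_le)
qed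

text \<open>Concavity via the second derivative: with \<open>L t = ln (1 + c/t)\<close> and
  \<open>q t = t (t+c) (L t)\<^sup>2\<close>, the derivative is \<open>c / q t\<close>, and \<open>q\<close> is increasing because
  \<open>q' t = L t ((2t+c) L t - 2c) \<ge> 0\<close> by the logarithm bound.\<close>
lemma inv_rate_concave:
  assumes c: "c > 0"
  shows "concave_on {0<..} (inv_rate c)"
proof -
  define L where "L t = ln (1 + c/t)" for t
  define q where "q t = t*(t+c)*(L t)^2" for t
  define q' where "q' t = (2*t+c)*(L t)^2 - 2*c*L t" for t
  have inv_rate_L: "inv_rate c = (\<lambda>t. 1 / L t)"
    by (simp add: inv_rate_def L_def fun_eq_iff)
  have L_pos: "L t > 0" if "t > 0" for t
    using that c by (simp add: L_def ln_gt_zero)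
  have q_pos: "q t > 0" if "t > 0" for t
    using that c L_pos[OF that] by (simp add: q_def)
  have dL: "(L has_real_derivative - c / (t*(t+c))) (at t)" if "t > 0" for t
  proof -
    have "(L has_real_derivative (- c / t^2) / (1 + c/t)) (at t)"
      unfolding L_def[abs_def] using that c
      by (auto intro!: derivative_eq_intros simp: power2_eq_square add_pos_pos)
    moreover have "(- c / t^2) / (1 + c/t) = - c / (t*(t+c))"
      using that c by (simp add: field_simps power2_eq_square)
    ultimately show ?thesis by (rule DERIV_cong)
  qed
  have dq: "(q has_real_derivative q' t) (at t)" if "t > 0" for t
  proof -
    have "(q has_real_derivative (2*t+c)*(L t)^2 + t*(t+c)*(2*L t*(- c / (t*(t+c))))) (at t)"
      unfolding q_def[abs_def]
      by (rule derivative_eq_intros dL[OF that] refl)+ (simp add: algebra_simps power2_eq_square)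
    moreover have "t*(t+c)*(2*L t*(- c / (t*(t+c)))) = - (2*c*L t)"
      using that c by (simp add: divide_simps add_pos_pos)
    ultimately show ?thesis
      by (simp add: q'_def)
  qed
  have q'_nonneg: "q' t \<ge> 0" if t: "t > 0" for t
  proof -
    have "2*(c/t)/(2+c/t) \<le> L t"
      unfolding L_def using t c by (intro ln_one_plus_lower_bound) auto
    then have "2*c \<le> (2*t+c) * L t"
      using t c by (simp add: field_simps)
    then have "2*c*L t \<le> (2*t+c) * L t * L t"
      using L_pos[OF t] by (intro mult_right_mono) auto
    then show ?thesis by (simp add: q'_def power2_eq_square)
  qed
  show ?thesis
  proof (rule f''_le0_imp_concave[where f' = "\<lambda>t. c / q t" and f'' = "\<lambda>t. - c * q' t / (q t)^2"])
    fix t :: real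
    assume "t \<in> {0<..}"
    then have t: "t > 0" by simp
    have "((\<lambda>t. 1 / L t) has_real_derivative - (- c / (t*(t+c))) / (L t)^2) (at t)"
      using L_pos[OF t] by (auto intro!: derivative_eq_intros dL[OF t] simp: power2_eq_square)
    moreover have "- (- c / (t*(t+c))) / (L t)^2 = c / q t"
      using t c L_pos[OF t] by (simp add: q_def field_simps)
    ultimately show "(inv_rate c has_real_derivative c / q t) (at t)"
      unfolding inv_rate_L by (rule DERIV_cong)
    show "((\<lambda>t. c / q t) has_real_derivative - c * q' t / (q t)^2) (at t)"
      using q_pos[OF t] by (auto intro!: derivative_eq_intros dq[OF t] simp: power2_eq_square)
    show "- c * q' t / (q t)^2 \<le> 0"
      using c q'_nonneg[OF t] by (simp add: divide_nonpos_nonneg)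
  qed simp
qed

locale cell_load =
  fixes d :: "'n::finite \<Rightarrow> real"
    and x :: "'m::finite \<Rightarrow> 'n \<Rightarrow> bool"
    and g :: "'m \<Rightarrow> 'n \<Rightarrow> real"
    and P :: "'m \<Rightarrow> real"
    and \<sigma>2 K B \<eta> :: real
  assumes d_pos: "\<And>j. d j > 0"
    and x_cover: "\<And>i. \<exists>j. x i j"
    and g_nonneg: "\<And>i j. g i j \<ge> 0"
    and g_pos: "\<And>i j. x i j \<Longrightarrow> g i j > 0"
    and P_pos: "\<And>i. P i > 0"
    and \<sigma>2_pos: "\<sigma>2 > 0"
    and K_pos: "K > 0" and B_pos: "B > 0" and \<eta>_pos: "\<eta> > 0"
begin

definition interference :: "'m \<Rightarrow> 'n \<Rightarrow> real^'m \<Rightarrow> real" where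
  "interference i j \<rho> = (\<Sum>l\<in>UNIV - {i}. P l * g l j * \<rho> $ l)"

definition signal :: "'m \<Rightarrow> 'n \<Rightarrow> real" where
  "signal i j = P i * g i j / \<eta>"

definition weight :: "'n \<Rightarrow> real" where
  "weight j = d j * ln 2 / (K * B)"

lemma signal_pos: "x i j \<Longrightarrow> signal i j > 0"
  using P_pos g_pos \<eta>_pos by (simp add: signal_def)

lemma weight_pos: "weight j > 0"
  using d_pos K_pos B_pos by (simp add: weight_def)

lemma interference_linear: "linear (interference i j)"
  unfolding interference_def[abs_def]
  by (rule linearI) (simp_all add: sum.distrib sum_distrib_left algebra_simps)

lemma interference_nonneg: "\<rho> \<in> nonneg_orthant \<Longrightarrow> interference i j \<rho> \<ge> 0"
  unfolding interference_def nonneg_orthant_def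
  using P_pos g_nonneg by (intro sum_nonneg) (simp add: less_imp_le)

lemma interference_mono:
  "\<forall>k. \<rho>2 $ k \<le> \<rho>1 $ k \<Longrightarrow> interference i j \<rho>2 \<le> interference i j \<rho>1"
  unfolding interference_def
  by (intro sum_mono mult_left_mono mult_nonneg_nonneg less_imp_le[OF P_pos] g_nonneg) auto

lemma noise_level_pos: "\<rho> \<in> nonneg_orthant \<Longrightarrow> interference i j \<rho> + \<sigma>2 > 0"
  using interference_nonneg \<sigma>2_pos by (smt (verit))

lemma load_fun_eq:
  "load_fun d x K B P g \<eta> \<sigma>2 i \<rho> =
     (\<Sum>j\<in>{j. x i j}. weight j * inv_rate (signal i j) (interference i j \<rho> + \<sigma>2))"
  unfolding load_fun_def omega_def inv_rate_def weight_def signal_def interference_def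
  by (intro sum.cong) (simp_all add: log_def)

lemma load_concave: "concave_on nonneg_orthant (load_fun d x K B P g \<eta> \<sigma>2 i)"
  unfolding load_fun_eq
proof (intro concave_on_sum_fun convex_nonneg_orthant concave_on_cmul less_imp_le[OF weight_pos])
  fix j assume "j \<in> {j. x i j}"
  then show "concave_on nonneg_orthant (\<lambda>\<rho>. inv_rate (signal i j) (interference i j \<rho> + \<sigma>2))"
    using noise_level_pos
    by (intro concave_on_compose_affine[OF inv_rate_concave] signal_pos
        convex_nonneg_orthant interference_linear) auto
qed simp

lemma load_pos: "\<rho> \<in> nonneg_orthant \<Longrightarrow> load_fun d x K B P g \<eta> \<sigma>2 i \<rho> > 0"
  unfolding load_fun_eq
  using x_cover[of i] weight_pos inv_rate_pos[OF signal_pos noise_level_pos]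
  by (intro sum_pos) auto

lemma load_mono:
  assumes "\<rho>2 \<in> nonneg_orthant" "\<forall>k. \<rho>2 $ k \<le> \<rho>1 $ k"
  shows "load_fun d x K B P g \<eta> \<sigma>2 i \<rho>2 \<le> load_fun d x K B P g \<eta> \<sigma>2 i \<rho>1"
  unfolding load_fun_eq
  using assms less_imp_le[OF weight_pos] interference_mono
  by (intro sum_mono mult_left_mono inv_rate_mono[OF signal_pos noise_level_pos]) auto

lemma load_standard: "standard_interference_function (load_fun d x K B P g \<eta> \<sigma>2 i)"
  using load_concave load_pos load_mono by (rule standard_interference_functionI)

end

theorem mainTheorem2:
  fixes d :: "'n::finite \<Rightarrow> real"
    and x :: "'m::finite \<Rightarrow> 'n \<Rightarrow> bool"
    and g :: "'m \<Rightarrow> 'n \<Rightarrow> real"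
    and P :: "'m \<Rightarrow> real"
    and \<sigma>2 K B \<eta> :: real
  assumes d_pos: "\<And>j. d j > 0"
    and x_cover: "\<And>i. \<exists>j. x i j"
    and g_nonneg: "\<And>i j. g i j \<ge> 0"
    and g_pos: "\<And>i j. x i j \<Longrightarrow> g i j > 0"
    and P_pos: "\<And>i. P i > 0"
    and \<sigma>2_pos: "\<sigma>2 > 0"
    and K_pos: "K > 0" and B_pos: "B > 0" and \<eta>_pos: "\<eta> > 0"
  shows "(\<forall>i. concave_on nonneg_orthant (load_fun d x K B P g \<eta> \<sigma>2 i) \<and>
              standard_interference_function (load_fun d x K B P g \<eta> \<sigma>2 i)) \<and>
         standard_interference_mapping (\<lambda>\<rho>. \<chi> i. load_fun d x K B P g \<eta> \<sigma>2 i \<rho>)"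
proof -
  interpret cell_load d x g P \<sigma>2 K B \<eta>
    using assms by unfold_locales
  show ?thesis
    unfolding standard_interference_mapping_def
    using load_concave load_standard by simp
qed

end
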